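(* Let $\ell\geq 1$, let $G\subseteq\mathcal{G}_\Sigma^\ell$ be a non-empty finite set of generalized strings of length $\ell$, and let $(Q,\Sigma,\Delta,Q_\alpha,F)=\mathrm{NFA}(G)$. Then for every $s\in\Sigma^*$: there exists $q\in Q_\alpha$ with $\hat\Delta(q,s)\cap F\neq\emptyset$ if and only if there exists $g\in G$ such that $s\vartriangleleft g$.
   Context: For a finite alphabet $\Sigma$, $\mathcal{G}_\Sigma=\mathcal{P}(\Sigma)\setminus\{\emptyset\}$ and a generalized string is a finite string $g=g[1]\cdots g[|g|]$ over $\mathcal{G}_\Sigma$; $\mathcal{G}_\Sigma^\ell$ is the set of generalized strings of length $\ell$. A string $s\in\Sigma^*$ matches $g$, written $s\vartriangleleft g$, if $|s|=|g|$ and $s[i]\in g[i]$ for all $1\le i\le|g|$. Construction of $\mathrm{NFA}(G)$: let $\bar Q=\mathcal{P}(G)\times\{0,\dots,\ell\}$ and define $\mathrm{Parent}:\bar Q\times\Sigma\to\bar Q\cup\{\bot\}$ by $\mathrm{Parent}((H,k),\sigma)=(\{h\in H:\sigma\in h[k]\},k-1)$ if $k>0$ and $\bot$ if $k=0$. Set $Q_\ell=\{(G,\ell)\}$ and, for $i=\ell-1,\dots,0$, $Q_i=\{(H,i): H\subseteq G,\ H\neq\emptyset,\ \exists q\in Q_{i+1},\sigma\in\Sigma \text{ with } \mathrm{Parent}(q,\sigma)=(H,i)\}$. Let $Q=Q_0\cup\dots\cup Q_\ell$, $\Delta((H,k),\sigma)=\{q\in Q_{k+1}:\mathrm{Parent}(q,\sigma)=(H,k)\}$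 if $k<\ell$ and $\emptyset$ if $k=\ell$, $Q_\alpha=Q_0$, $F=Q_\ell$. Then $\mathrm{NFA}(G)=(Q,\Sigma,\Delta,Q_\alpha,F)$. $\hat\Delta$ denotes the extension of $\Delta$ to strings: $\hat\Delta(q,\varepsilon)=\{q\}$, $\hat\Delta(q,\sigma s)=\bigcup_{p\in\Delta(q,\sigma)}\hat\Delta(p,s)$. *)

theory Defs
  imports Main
begin

text \<open>Alphabet: a finite carrier set Sig. A generalized string of length l is a list
  of length l of non-empty subsets of Sig. Positions are 1-based in the paper;
  g[k] is rendered as g ! (k - 1).\<close>

definition gen_strings :: "'a set \<Rightarrow> nat \<Rightarrow> 'a set list set" where
  "gen_strings Sig l = {g. length g = l \<and> (\<forall>x\<in>set g. x \<subseteq> Sig \<and> x \<noteq> {})}"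

definition matches :: "'a list \<Rightarrow> 'a set list \<Rightarrow> bool" where
  "matches s g \<longleftrightarrow> length s = length g \<and> (\<forall>i<length g. s ! i \<in> g ! i)"

type_synonym 'a state = "'a set list set \<times> nat"

text \<open>Parent((H,k),sigma); None plays the role of bottom.\<close>
definition parent :: "'a state \<Rightarrow> 'a \<Rightarrow> 'a state option" where
  "parent q \<sigma> = (case q of (H, k) \<Rightarrow>
     if k > 0 then Some ({h \<in> H. \<sigma> \<in> h ! (k - 1)}, k - 1) else None)"

text \<open>levQ Sig G l d = Q_(l-d), built downwards from Q_l = {(G,l)}.\<close>
fun levQ :: "'a set \<Rightarrow> 'a set list set \<Rightarrow> nat \<Rightarrow> nat \<Rightarrow> 'a state set" where
  "levQ Sig G l 0 = {(G, l)}"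
| "levQ Sig G l (Suc d) =
     {(H, i) | H i. i = l - Suc d \<and> H \<subseteq> G \<and> H \<noteq> {} \<and>
        (\<exists>q\<in>levQ Sig G l d. \<exists>\<sigma>\<in>Sig. parent q \<sigma> = Some (H, i))}"

definition Qi :: "'a set \<Rightarrow> 'a set list set \<Rightarrow> nat \<Rightarrow> nat \<Rightarrow> 'a state set" where
  "Qi Sig G l i = levQ Sig G l (l - i)"

definition nfa_Delta :: "'a set \<Rightarrow> 'a set list set \<Rightarrow> nat \<Rightarrow> 'a state \<Rightarrow> 'a \<Rightarrow> 'a state set" where
  "nfa_Delta Sig G l q \<sigma> = (case q of (H, k) \<Rightarrow>
     if k < l then {p \<in> Qi Sig G l (k + 1). parent p \<sigma> = Some (H, k)} else {})"

text \<open>NFA(G) = (Q, Delta, Q_alpha, F); the alphabet component is Sig itself.\<close>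
definition NFA :: "'a set \<Rightarrow> 'a set list set \<Rightarrow> nat \<Rightarrow>
    'a state set \<times> ('a state \<Rightarrow> 'a \<Rightarrow> 'a state set) \<times> 'a state set \<times> 'a state set" where
  "NFA Sig G l = ((\<Union>i\<in>{0..l}. Qi Sig G l i), nfa_Delta Sig G l,
                    Qi Sig G l 0, Qi Sig G l l)"

fun Delta_hat :: "('q \<Rightarrow> 'a \<Rightarrow> 'q set) \<Rightarrow> 'q \<Rightarrow> 'a list \<Rightarrow> 'q set" where
  "Delta_hat \<Delta> q [] = {q}"
| "Delta_hat \<Delta> q (\<sigma> # s) = (\<Union>p\<in>\<Delta> q \<sigma>. Delta_hat \<Delta> p s)"

end

theory Submission
  imports Defs
begin

(* A state (H,k) of NFA(G) is the set of generalized strings of G that are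
   still compatible with the suffix of the input read "backwards" from the final state:
   reading s from (H,k) reaches the final state (G,l) exactly when k + |s| = l and H is the
   set  survivors G k s  of all g in G with s[j] in g[k+j] for every position j of s.  Soundness: every run into (G,l) starts
   in the survivor state of the remaining input.  Completeness: every non-empty survivor
   state lies on the prescribed level Q_k and has a run into (G,l).  Since initial states
   are non-empty and lie on level 0, acceptance of s amounts to survivors G 0 s being
   non-empty with |s| = l, which is exactly the existence of a matching g in G. *)

definition survivors :: "'a set list set \<Rightarrow> nat \<Rightarrow> 'a list \<Rightarrow> 'a set list set" where
  "survivors G k s = {g \<in> G. \<forall>j<length s. s ! j \<in> g ! (k + j)}"

lemma survivors_Nil [simp]: "survivors G k [] = G"
  by (simp add: survivors_def)

lemma survivors_Cons: "survivors G k (\<sigma> # s) = {h \<in> survivors G (Suc k) s. \<sigma> \<in> h ! k}"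
proof -
  have "(\<forall>j<Suc (length s). (\<sigma> # s) ! j \<in> g ! (k + j)) \<longleftrightarrow>
        \<sigma> \<in> g ! k \<and> (\<forall>j<length s. s ! j \<in> g ! (Suc k + j))" for g
    by (auto simp: less_Suc_eq_0_disj)
  then show ?thesis
    by (auto simp: survivors_def)
qed

lemma parent_survivors:
  "parent (survivors G (Suc k) s, Suc k) \<sigma> = Some (survivors G k (\<sigma> # s), k)"
  by (simp add: parent_def survivors_Cons)

lemma levQ_state_shape:
  assumes "(H, k) \<in> levQ Sig G l d" and "G \<noteq> {}"
  shows "k = l - d \<and> H \<noteq> {}"
  using assms by (cases d) auto

lemma run_to_final_sound:
  assumes "(G, l) \<in> Delta_hat (nfa_Delta Sig G l) (H, k) s"
  shows "k + length s = l \<and> H = survivors G k s"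
  using assms
proof (induction s arbitrary: H k)
  case Nil
  then show ?case by simp
next
  case (Cons \<sigma> s)
  then obtain H' k' where step: "(H', k') \<in> nfa_Delta Sig G l (H, k) \<sigma>"
    and rest: "(G, l) \<in> Delta_hat (nfa_Delta Sig G l) (H', k') s"
    by auto
  from step have "parent (H', k') \<sigma> = Some (H, k)"
    by (auto simp: nfa_Delta_def split: if_splits)
  then have k': "k' = Suc k" and H: "H = {h \<in> H'. \<sigma> \<in> h ! k}"
    by (auto simp: parent_def split: if_splits)
  from Cons.IH[OF rest] k' H show ?case
    by (simp add: survivors_Cons)
qed

lemma survivors_in_level:
  assumes "k + length s = l" and "set s \<subseteq> Sig" and "survivors G k s \<noteq> {}"
  shows "(survivors G k s, k) \<in> Qi Sig G l k"
  using assms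
proof (induction s arbitrary: k)
  case Nil
  then show ?case by (simp add: Qi_def)
next
  case (Cons \<sigma> s)
  have parent_in_level: "(survivors G (Suc k) s, Suc k) \<in> levQ Sig G l (l - Suc k)"
    using Cons.IH[of "Suc k"] Cons.prems by (auto simp: Qi_def survivors_Cons)
  have "l - k = Suc (l - Suc k)" and "\<sigma> \<in> Sig" and "survivors G k (\<sigma> # s) \<subseteq> G"
    using Cons.prems by (auto simp: survivors_def)
  then show ?case
    unfolding Qi_def
    using parent_in_level parent_survivors[of G k s \<sigma>] Cons.prems(3)
    by (auto intro!: bexI[of _ \<sigma>])
qed

lemma run_to_final_complete:
  assumes "k + length s = l" and "set s \<subseteq> Sig" and "survivors G k s \<noteq> {}"
  shows "(G, l) \<in> Delta_hat (nfa_Delta Sig G l) (survivors G k s, k) s"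
  using assms
proof (induction s arbitrary: k)
  case Nil
  then show ?case by simp
next
  case (Cons \<sigma> s)
  have ne: "survivors G (Suc k) s \<noteq> {}"
    using Cons.prems(3) by (auto simp: survivors_Cons)
  have "(survivors G (Suc k) s, Suc k) \<in> Qi Sig G l (Suc k)"
    using survivors_in_level[of "Suc k" s l Sig G] Cons.prems ne by simp
  then have "(survivors G (Suc k) s, Suc k) \<in> nfa_Delta Sig G l (survivors G k (\<sigma> # s), k) \<sigma>"
    using Cons.prems(1) parent_survivors[of G k s \<sigma>] by (simp add: nfa_Delta_def)
  with Cons.IH[of "Suc k"] Cons.prems ne show ?case
    by auto
qed

lemma matches_iff_survivors:
  assumes "G \<subseteq> gen_strings Sig l"
  shows "(\<exists>g\<in>G. matches s g) \<longleftrightarrow> length s = l \<and> survivors G 0 s \<noteq> {}"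
proof -
  have "length g = l" if "g \<in> G" for g
    using assms that by (auto simp: gen_strings_def)
  then show ?thesis
    by (auto simp: matches_def survivors_def)
qed

theorem mainTheorem5:
  fixes Sig :: "'a set" and G :: "'a set list set" and l :: nat
  assumes "finite Sig"
    and "l \<ge> 1"
    and "G \<subseteq> gen_strings Sig l" and "G \<noteq> {}" and "finite G"
    and "NFA Sig G l = (Q, \<Delta>, Q\<^sub>\<alpha>, F)"
    and "set s \<subseteq> Sig"
  shows "(\<exists>q\<in>Q\<^sub>\<alpha>. Delta_hat \<Delta> q s \<inter> F \<noteq> {}) \<longleftrightarrow> (\<exists>g\<in>G. matches s g)"
proof -
  have \<Delta>: "\<Delta> = nfa_Delta Sig G l" and Q\<^sub>\<alpha>: "Q\<^sub>\<alpha> = Qi Sig G l 0" and F: "F = {(G, l)}"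
    using assms(6) by (auto simp: NFA_def Qi_def)
  have "(\<exists>q\<in>Q\<^sub>\<alpha>. Delta_hat \<Delta> q s \<inter> F \<noteq> {}) \<longleftrightarrow> length s = l \<and> survivors G 0 s \<noteq> {}"
  proof
    assume "\<exists>q\<in>Q\<^sub>\<alpha>. Delta_hat \<Delta> q s \<inter> F \<noteq> {}"
    then obtain H k where init: "(H, k) \<in> levQ Sig G l l"
      and run: "(G, l) \<in> Delta_hat (nfa_Delta Sig G l) (H, k) s"
      using \<Delta> Q\<^sub>\<alpha> F by (auto simp: Qi_def)
    from levQ_state_shape[OF init assms(4)] run_to_final_sound[OF run]
    show "length s = l \<and> survivors G 0 s \<noteq> {}" by auto
  next
    assume "length s = l \<and> survivors G 0 s \<noteq> {}"
    with survivors_in_level[of 0 s l Sig G] run_to_final_complete[of 0 s l Sig G] assms(7)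
    show "\<exists>q\<in>Q\<^sub>\<alpha>. Delta_hat \<Delta> q s \<inter> F \<noteq> {}"
      using \<Delta> Q\<^sub>\<alpha> F by auto
  qed
  with matches_iff_survivors[OF assms(3)] show ?thesis by simp
qed

end
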